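(* Let $F$ be an infinite field of characteristic $p>2$ and $k$ a positive integer. Then $E^{k^\ast}$ satisfies the $\mathbb{Z}$-graded identity $x^p$ for every variable $x$ of degree $\alpha(x)\neq 0$.
   Context: $L$ is a vector space over $F$ with basis $e_1,e_2,\dots$, $E$ its unital Grassmann algebra (basis $1$ and $e_{i_1}\cdots e_{i_k}$, $i_1<\cdots<i_k$, with $e_ie_j=-e_je_i$). $E^{k^\ast}$ is $E$ with the $\mathbb{Z}$-grading induced by $\|e_i\|=1$ for $i\le k$, $\|e_i\|=0$ for $i>k$, a basis monomial having degree the sum of the degrees of its factors and $1$ having degree $0$. A graded polynomial in variables with prescribed integer degrees $\alpha(x)$ is a graded identity of a $\mathbb{Z}$-graded algebra $A$ if it vanishes whenever each variable $x$ is replaced by an element of the homogeneous component $A_{\alpha(x)}$. *)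

theory Defs
  imports Main "HOL-Computational_Algebra.Primes"
begin

text \<open>Unital Grassmann algebra E over a field 'a on generators e_1, e_2, ... (indexed by positive
naturals).  An element is represented by its coefficient function on basis monomials:
a basis monomial e_{i_1} ... e_{i_m} (i_1 < ... < i_m) is identified with the finite set
{i_1,...,i_m} of positive naturals; the empty set is the unit 1.\<close>

definition grass :: "(nat set \<Rightarrow> 'a::field) set" where
  "grass = {a. finite {S. a S \<noteq> 0} \<and> (\<forall>S. a S \<noteq> 0 \<longrightarrow> finite S \<and> 0 \<notin> S)}"

text \<open>Sign of the product of monomials e_T * e_U (T, U disjoint): one factor -1 for each
pair i in T, j in U with j < i (number of transpositions needed to sort).\<close>
definition grass_sign :: "nat set \<Rightarrow> nat set \<Rightarrow> 'a::field" where
  "grass_sign T U = (-1) ^ card {(i, j). i \<in> T \<and> j \<in> U \<and> j < i}"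

definition grass_mult :: "(nat set \<Rightarrow> 'a::field) \<Rightarrow> (nat set \<Rightarrow> 'a) \<Rightarrow> (nat set \<Rightarrow> 'a)" where
  "grass_mult a b = (\<lambda>S. \<Sum>T\<in>Pow S. grass_sign T (S - T) * a T * b (S - T))"

definition grass_one :: "nat set \<Rightarrow> 'a::field" where
  "grass_one = (\<lambda>S. if S = {} then 1 else 0)"

primrec grass_pow :: "(nat set \<Rightarrow> 'a::field) \<Rightarrow> nat \<Rightarrow> (nat set \<Rightarrow> 'a)" where
  "grass_pow x 0 = grass_one"
| "grass_pow x (Suc n) = grass_mult x (grass_pow x n)"

text \<open>Z-grading of E^{k*}: ||e_i|| = 1 for i \<le> k, 0 for i > k; monomial degree is the sum.\<close>
definition grass_deg :: "nat \<Rightarrow> nat set \<Rightarrow> int" where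
  "grass_deg k S = int (card {i \<in> S. i \<le> k})"

definition grass_component :: "nat \<Rightarrow> int \<Rightarrow> (nat set \<Rightarrow> 'a::field) set" where
  "grass_component k d = {a \<in> grass. \<forall>S. a S \<noteq> 0 \<longrightarrow> grass_deg k S = d}"

end

(* Write x = a + b with a the even and b the odd part of x. Even monomials are central, and
   odd elements square to zero since 2 is invertible. For commuting u, v with v^2 = 0 the
   binomial formula collapses to (u + v)^(n+1) = u^(n+1) + (n+1) u^n v, so in characteristic p
   we get (u + v)^p = u^p. Hence x^p = a^p, and removing the finitely many monomials of a one at
   a time (each is central and, having no constant term, squares to zero) gives a^p = 0.
   The grading enters only through d <> 0, which forces x to have no constant term. *)

theory Submission
  imports Defs "HOL-Library.Function_Algebras"
begin

lemma grass_sign_empty_left [simp]: "grass_sign {} U = 1"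
  and grass_sign_empty_right [simp]: "grass_sign T {} = 1"
  unfolding grass_sign_def by simp_all

lemma grass_sign_Un_left:
  assumes "finite T1" "finite T2" "finite U" "T1 \<inter> T2 = {}"
  shows "(grass_sign (T1 \<union> T2) U :: 'a::field) = grass_sign T1 U * grass_sign T2 U"
proof -
  have split: "{(i, j). i \<in> T1 \<union> T2 \<and> j \<in> U \<and> j < i} =
      {(i, j). i \<in> T1 \<and> j \<in> U \<and> j < i} \<union> {(i, j). i \<in> T2 \<and> j \<in> U \<and> j < i}"
    by auto
  have "finite {(i, j). i \<in> T1 \<and> j \<in> U \<and> j < i}" "finite {(i, j). i \<in> T2 \<and> j \<in> U \<and> j < i}"
    by (rule finite_subset[of _ "T1 \<times> U"] finite_subset[of _ "T2 \<times> U"]; use assms in auto)+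
  then show ?thesis
    unfolding grass_sign_def split using assms by (subst card_Un_disjoint) (auto simp: power_add)
qed

lemma grass_sign_Un_right:
  assumes "finite T" "finite U1" "finite U2" "U1 \<inter> U2 = {}"
  shows "(grass_sign T (U1 \<union> U2) :: 'a::field) = grass_sign T U1 * grass_sign T U2"
proof -
  have split: "{(i, j). i \<in> T \<and> j \<in> U1 \<union> U2 \<and> j < i} =
      {(i, j). i \<in> T \<and> j \<in> U1 \<and> j < i} \<union> {(i, j). i \<in> T \<and> j \<in> U2 \<and> j < i}"
    by auto
  have "finite {(i, j). i \<in> T \<and> j \<in> U1 \<and> j < i}" "finite {(i, j). i \<in> T \<and> j \<in> U2 \<and> j < i}"
    by (rule finite_subset[of _ "T \<times> U1"] finite_subset[of _ "T \<times> U2"]; use assms in auto)+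
  then show ?thesis
    unfolding grass_sign_def split using assms by (subst card_Un_disjoint) (auto simp: power_add)
qed

lemma grass_sign_commute:
  assumes "finite T" "finite U" "T \<inter> U = {}"
  shows "(grass_sign U T :: 'a::field) = (-1) ^ (card T * card U) * grass_sign T U"
proof -
  define below where "below = {(i, j). i \<in> T \<and> j \<in> U \<and> j < i}"
  define above where "above = {(i, j). i \<in> T \<and> j \<in> U \<and> i < j}"
  have "{(i, j). i \<in> U \<and> j \<in> T \<and> j < i} = prod.swap ` above"
    unfolding above_def by auto
  then have sign_UT: "grass_sign U T = (-1 :: 'a) ^ card above"
    unfolding grass_sign_def by (simp add: card_image)
  have "below \<union> above = T \<times> U" "below \<inter> above = {}"
    unfolding below_def above_def using assms(3) by auto
  then have "card below + card above = card T * card U"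
    using assms(1,2) by (metis card_Un_disjoint card_cartesian_product finite_SigmaI finite_Un)
  then have "(-1 :: 'a) ^ (card T * card U) * grass_sign T U = (-1) ^ (2 * card below + card above)"
    unfolding grass_sign_def below_def[symmetric] by (metis add.commute add.left_commute mult_2 power_add)
  then show ?thesis
    unfolding sign_UT by (simp add: power_add)
qed

lemma grass_mult_infinite: "infinite S \<Longrightarrow> grass_mult u w S = 0"
  unfolding grass_mult_def by simp

lemma grass_mult_zero_left [simp]: "grass_mult 0 w = 0"
  and grass_mult_zero_right [simp]: "grass_mult w 0 = 0"
  unfolding grass_mult_def zero_fun_def by simp_all

lemma grass_mult_add_left: "grass_mult (u + v) w = grass_mult u w + grass_mult v w"
  and grass_mult_add_right: "grass_mult w (u + v) = grass_mult w u + grass_mult w v"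
  unfolding grass_mult_def plus_fun_def by (auto simp: sum.distrib[symmetric] ring_distribs)

lemma grass_mult_scale_right: "grass_mult w (\<lambda>S. c * u S) = (\<lambda>S. c * grass_mult w u S)"
  unfolding grass_mult_def by (auto simp: sum_distrib_left mult_ac)

lemma grass_mult_one_right: "grass_mult w grass_one = (\<lambda>S. if finite S then w S else 0)"
proof
  fix S
  show "grass_mult w grass_one S = (if finite S then w S else 0)"
  proof (cases "finite S")
    case True
    have "grass_mult w grass_one S = (\<Sum>T\<in>Pow S. if T = S then w T else 0)"
      unfolding grass_mult_def grass_one_def by (rule sum.cong) auto
    with True show ?thesis by simp
  qed (simp add: grass_mult_infinite)
qed

lemma grass_mult_one_left: "grass_mult grass_one w = (\<lambda>S. if finite S then w S else 0)"
proof
  fix S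
  show "grass_mult grass_one w S = (if finite S then w S else 0)"
  proof (cases "finite S")
    case True
    have "grass_mult grass_one w S = (\<Sum>T\<in>Pow S. if T = {} then w S else 0)"
      unfolding grass_mult_def grass_one_def by (rule sum.cong) auto
    with True show ?thesis by simp
  qed (simp add: grass_mult_infinite)
qed

lemma grass_mult_assoc: "grass_mult (grass_mult a b) c = grass_mult a (grass_mult b c)"
proof
  fix S
  show "grass_mult (grass_mult a b) c S = grass_mult a (grass_mult b c) S"
  proof (cases "finite S")
    case fin: True
    have "grass_mult (grass_mult a b) c S = (\<Sum>T\<in>Pow S. \<Sum>U\<in>Pow T.
          grass_sign T (S - T) * grass_sign U (T - U) * a U * b (T - U) * c (S - T))"
      unfolding grass_mult_def by (simp add: sum_distrib_left sum_distrib_right mult_ac)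
    also have "\<dots> = (\<Sum>(T, U)\<in>Sigma (Pow S) Pow.
          grass_sign T (S - T) * grass_sign U (T - U) * a U * b (T - U) * c (S - T))"
      using fin by (intro sum.Sigma) (auto intro: finite_subset)
    also have "\<dots> = (\<Sum>(U, V)\<in>Sigma (Pow S) (\<lambda>U. Pow (S - U)).
          grass_sign U (S - U) * grass_sign V (S - U - V) * a U * b V * c (S - U - V))"
    proof (rule sum.reindex_bij_witness[where i = "\<lambda>(U, V). (U \<union> V, U)" and j = "\<lambda>(T, U). (U, T - U)"])
      fix TU assume "TU \<in> Sigma (Pow S) Pow"
      then obtain T U where TU: "TU = (T, U)" "U \<subseteq> T" "T \<subseteq> S" by auto
      then have fin_parts: "finite U" "finite (T - U)" "finite (S - T)"
        using fin by (auto intro: finite_subset)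
      have parts: "S - U = (T - U) \<union> (S - T)" "T = U \<union> (T - U)" "S - U - (T - U) = S - T"
        using TU by auto
      have "grass_sign U (S - U) = (grass_sign U (T - U) * grass_sign U (S - T) :: 'a)"
        unfolding parts(1) by (rule grass_sign_Un_right) (use fin_parts in auto)
      moreover have "grass_sign T (S - T) = (grass_sign U (S - T) * grass_sign (T - U) (S - T) :: 'a)"
        by (subst parts(2), rule grass_sign_Un_left) (use fin_parts in auto)
      ultimately show "(case (case TU of (T, U) \<Rightarrow> (U, T - U)) of (U, V) \<Rightarrow>
            grass_sign U (S - U) * grass_sign V (S - U - V) * a U * b V * c (S - U - V)) =
          (case TU of (T, U) \<Rightarrow>
            grass_sign T (S - T) * grass_sign U (T - U) * a U * b (T - U) * c (S - T))"
        using TU(1) parts(3) by (simp add: mult_ac)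
    qed auto
    also have "\<dots> = (\<Sum>U\<in>Pow S. \<Sum>V\<in>Pow (S - U).
          grass_sign U (S - U) * grass_sign V (S - U - V) * a U * b V * c (S - U - V))"
      using fin by (intro sum.Sigma[symmetric]) (auto intro: finite_subset)
    also have "\<dots> = grass_mult a (grass_mult b c) S"
      unfolding grass_mult_def by (simp add: sum_distrib_left sum_distrib_right mult_ac)
    finally show ?thesis .
  qed (simp add: grass_mult_infinite)
qed

lemma grass_mult_commute_sign:
  assumes "\<And>T U. u T \<noteq> 0 \<Longrightarrow> w U \<noteq> 0 \<Longrightarrow> finite T \<Longrightarrow> finite U \<Longrightarrow> T \<inter> U = {} \<Longrightarrow>
      (-1 :: 'a::field) ^ (card T * card U) = e"
  shows "grass_mult w u = (\<lambda>S. e * grass_mult u w S)"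
proof
  fix S
  show "grass_mult w u S = e * grass_mult u w S"
  proof (cases "finite S")
    case fin: True
    have "grass_mult w u S = (\<Sum>T\<in>Pow S. grass_sign (S - T) T * w (S - T) * u T)"
      unfolding grass_mult_def
      by (rule sum.reindex_bij_witness[where i = "\<lambda>T. S - T" and j = "\<lambda>T. S - T"])
        (auto simp: Diff_Diff_Int Int_absorb1)
    also have "\<dots> = (\<Sum>T\<in>Pow S. e * (grass_sign T (S - T) * u T * w (S - T)))"
    proof (rule sum.cong[OF refl])
      fix T assume "T \<in> Pow S"
      then have "finite T" "finite (S - T)" "T \<inter> (S - T) = {}"
        using fin by (auto intro: finite_subset)
      then show "grass_sign (S - T) T * w (S - T) * u T = e * (grass_sign T (S - T) * u T * w (S - T))"
        using assms[of T "S - T"] grass_sign_commute[of T "S - T"]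
        by (cases "u T = 0 \<or> w (S - T) = 0") auto
    qed
    also have "\<dots> = e * grass_mult u w S"
      unfolding grass_mult_def by (simp add: sum_distrib_left)
    finally show ?thesis .
  qed (simp add: grass_mult_infinite)
qed

lemma grass_mult_commute_even:
  assumes "\<And>T. u T \<noteq> 0 \<Longrightarrow> even (card T)"
  shows "grass_mult u w = grass_mult w u"
  using grass_mult_commute_sign[of u w 1] assms by simp

lemma grass_mult_self_odd:
  assumes "\<And>T. u T \<noteq> 0 \<Longrightarrow> odd (card T)" and "(2::'a::field) \<noteq> 0"
  shows "grass_mult u u = (0 :: nat set \<Rightarrow> 'a)"
proof
  fix S
  have "grass_mult u u S = - grass_mult u u S"
    using fun_cong[OF grass_mult_commute_sign[of u u "-1"], of S] assms(1) by simp
  then have "2 * grass_mult u u S = 0"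
    by (metis add.right_inverse mult_2)
  with assms(2) show "grass_mult u u S = 0 S"
    by simp
qed

lemma grass_mult_eq_0_if_overlap:
  assumes "\<And>T U. u T \<noteq> 0 \<Longrightarrow> w U \<noteq> 0 \<Longrightarrow> T \<inter> U \<noteq> {}"
  shows "grass_mult u w = 0"
proof
  fix S
  show "grass_mult u w S = 0 S"
    unfolding grass_mult_def using assms by (auto intro!: sum.neutral) (metis Diff_disjoint)
qed

lemma grass_pow_commute:
  assumes "grass_mult u v = grass_mult v u"
  shows "grass_mult (grass_pow u n) v = grass_mult v (grass_pow u n)"
proof (induction n)
  case 0
  show ?case by (simp add: grass_mult_one_left grass_mult_one_right)
next
  case (Suc n)
  have "grass_mult (grass_pow u (Suc n)) v = grass_mult u (grass_mult v (grass_pow u n))"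
    using Suc.IH by (simp add: grass_mult_assoc)
  also have "\<dots> = grass_mult v (grass_pow u (Suc n))"
    using assms by (simp add: grass_mult_assoc[symmetric])
  finally show ?case .
qed

lemma grass_pow_add_square_zero:
  assumes commute: "grass_mult u v = grass_mult v u" and square: "grass_mult v v = 0"
  shows "grass_pow (u + v) (Suc n) =
    grass_pow u (Suc n) + (\<lambda>S. of_nat (Suc n) * grass_mult (grass_pow u n) v S)"
proof (induction n)
  case 0
  show ?case
    by (auto simp: grass_mult_one_left grass_mult_one_right)
next
  case (Suc n)
  define c :: 'a where "c = of_nat (Suc n)"
  have uv: "grass_mult u (grass_mult (grass_pow u n) v) = grass_mult (grass_pow u (Suc n)) v"
    by (simp add: grass_mult_assoc)
  have vu: "grass_mult v (grass_pow u (Suc n)) = grass_mult (grass_pow u (Suc n)) v"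
    by (rule grass_pow_commute[OF commute, symmetric])
  have vv: "grass_mult v (grass_mult (grass_pow u n) v) = 0"
    using grass_pow_commute[OF commute, of n] square by (simp add: grass_mult_assoc[symmetric])
  have "grass_pow (u + v) (Suc (Suc n)) =
      grass_mult (u + v) (grass_pow u (Suc n) + (\<lambda>S. c * grass_mult (grass_pow u n) v S))"
    unfolding grass_pow.simps(2)[of "u + v" "Suc n"] Suc.IH c_def ..
  also have "\<dots> = grass_pow u (Suc (Suc n)) + (\<lambda>S. c * grass_mult (grass_pow u (Suc n)) v S)
      + grass_mult (grass_pow u (Suc n)) v"
    unfolding grass_mult_add_left grass_mult_add_right grass_mult_scale_right uv vu vv
    by (simp add: add.assoc zero_fun_def)
  also have "\<dots> = grass_pow u (Suc (Suc n))
      + (\<lambda>S. of_nat (Suc (Suc n)) * grass_mult (grass_pow u (Suc n)) v S)"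
    by (simp add: fun_eq_iff c_def algebra_simps)
  finally show ?case .
qed

lemma grass_pow_add_square_zero_char:
  fixes u v :: "nat set \<Rightarrow> 'a::field"
  assumes "grass_mult u v = grass_mult v u" "grass_mult v v = 0"
    and "of_nat p = (0::'a)" "p > 0"
  shows "grass_pow (u + v) p = grass_pow u p"
proof -
  obtain n where "p = Suc n" using \<open>p > 0\<close> gr0_implies_Suc by blast
  then show ?thesis
    using grass_pow_add_square_zero[OF assms(1,2), of n] assms(3) by (simp add: fun_eq_iff)
qed

lemma grass_pow_even_eq_0:
  fixes a :: "nat set \<Rightarrow> 'a::field"
  assumes char: "of_nat p = (0::'a)" "p > 0"
    and "finite F" "{T. a T \<noteq> 0} \<subseteq> F" "\<And>T. a T \<noteq> 0 \<Longrightarrow> even (card T)" "a {} = 0"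
  shows "grass_pow a p = 0"
  using assms(3-)
proof (induction F arbitrary: a rule: finite_induct)
  case empty
  then have "a = 0" by auto
  moreover obtain m where "p = Suc m"
    using \<open>p > 0\<close> gr0_implies_Suc by blast
  ultimately show ?case
    by (simp only: grass_pow.simps grass_mult_zero_left)
next
  case (insert T0 F)
  define a' where "a' = a(T0 := 0)"
  define v where "v = (\<lambda>T. if T = T0 then a T0 else 0)"
  have "a = a' + v"
    by (auto simp: a'_def v_def)
  moreover have "grass_pow a' p = 0"
    using insert.prems by (intro insert.IH) (auto simp: a'_def split: if_splits)
  moreover have "grass_mult a' v = grass_mult v a'"
    using insert.prems by (intro grass_mult_commute_even[symmetric]) (auto simp: v_def split: if_splits)
  moreover have "grass_mult v v = 0"
    using insert.prems by (intro grass_mult_eq_0_if_overlap) (auto simp: v_def split: if_splits)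
  ultimately show ?case
    using grass_pow_add_square_zero_char[OF _ _ char] by metis
qed

lemma grass_pow_char_eq_0:
  fixes x :: "nat set \<Rightarrow> 'a::field"
  assumes char: "of_nat p = (0::'a)" "p > 0" and "(2::'a) \<noteq> 0"
    and "finite {S. x S \<noteq> 0}" "x {} = 0"
  shows "grass_pow x p = 0"
proof -
  define a where "a = (\<lambda>S. if even (card S) then x S else 0)"
  define b where "b = (\<lambda>S. if even (card S) then 0 else x S)"
  have "x = a + b"
    by (auto simp: a_def b_def)
  moreover have "grass_mult a b = grass_mult b a"
    by (rule grass_mult_commute_even) (auto simp: a_def split: if_splits)
  moreover have "grass_mult b b = 0"
    using assms(3) by (intro grass_mult_self_odd) (auto simp: b_def split: if_splits)
  moreover have "grass_pow a p = 0"
    using assms(4,5) by (intro grass_pow_even_eq_0[OF char, of "{S. x S \<noteq> 0}"])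
      (auto simp: a_def split: if_splits)
  ultimately show ?thesis
    using grass_pow_add_square_zero_char[OF _ _ char] by metis
qed

theorem mainTheorem5:
  fixes p k :: nat and d :: int
  assumes "infinite (UNIV :: 'a::field set)"
    and "prime p" and "CHAR('a) = p" and "p > 2"
    and "k > 0"
    and "d \<noteq> 0"
  shows "\<forall>x \<in> (grass_component k d :: (nat set \<Rightarrow> 'a) set). grass_pow x p = (\<lambda>_. 0)"
proof
  fix x :: "nat set \<Rightarrow> 'a"
  assume "x \<in> grass_component k d"
  then have "finite {S. x S \<noteq> 0}" and "x {} = 0"
    using \<open>d \<noteq> 0\<close> by (auto simp: grass_component_def grass_def grass_deg_def)
  moreover have "of_nat p = (0::'a)"
    using \<open>CHAR('a) = p\<close> by (metis of_nat_CHAR)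
  moreover have "(2::'a) \<noteq> 0"
    using \<open>CHAR('a) = p\<close> \<open>p > 2\<close> of_nat_eq_0_iff_char_dvd[where n = 2 and 'a = 'a]
    by (auto dest: dvd_imp_le)
  ultimately show "grass_pow x p = (\<lambda>_. 0)"
    using grass_pow_char_eq_0 \<open>p > 2\<close> by (metis zero_fun_def gr_zeroI not_less0)
qed

end
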